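(* Let $X$ be a $T_0$ space. For every irreducible subset $F$ of $X$ and every $x\in F^\delta$, there exists a net $(x_i)_{i\in I}$ with all $x_i\in F$ that $GSI_2$-converges to $x$.
   Context: For a $T_0$ space $X$, the specialization order is $x\le y$ iff $x\in \mathrm{cl}\{y\}$; $\uparrow A=\{x: a\le x\text{ for some } a\in A\}$, $\uparrow x=\uparrow\{x\}$; $A^\uparrow$, $A^\downarrow$ are the sets of upper and lower bounds of $A$, and $A^\delta=(A^\uparrow)^\downarrow$. A nonempty subset $A$ of a space is irreducible if whenever $A\subseteq F_1\cup F_2$ with $F_1,F_2$ closed, $A\subseteq F_1$ or $A\subseteq F_2$. $X^{(<\omega)}$ is the set of nonempty finite subsets of $X$. $P_S(X)$ is the set of nonempty compact saturated (upper) subsets of $X$ with the upper Vietoris topology, basis $\{\square U: U\text{ open}\}$, $\square U=\{Q: Q\subseteq U\}$. A net is eventually in $U$ if from some index on all its terms lie in $U$. A net $(x_i)_{i\in I}$ $GSI_2$-converges to $x$ if there exists $\mathcal F\subseteq X^{(<\omega)}$ with $\{\uparrow G: G\in\mathcal F\}$ irreducible in $P_S(X)$ such that (i) for every open $U$, if $\uparrow G\subseteq U$ for some $G\in\mathcal F$ then $x_i\in U$ eventually, and (ii) $\bigcap_{G\in\mathcal F}\uparrow G\subseteq\uparrow x$. *)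

theory Defs
  imports "HOL-Analysis.Analysis"
begin

definition spec_le :: "'a topology \<Rightarrow> 'a \<Rightarrow> 'a \<Rightarrow> bool" where
  "spec_le X x y \<longleftrightarrow> x \<in> X closure_of {y}"

definition upset :: "'a topology \<Rightarrow> 'a set \<Rightarrow> 'a set" where
  "upset X A = {x \<in> topspace X. \<exists>a\<in>A. spec_le X a x}"

definition upper_bounds :: "'a topology \<Rightarrow> 'a set \<Rightarrow> 'a set" where
  "upper_bounds X A = {u \<in> topspace X. \<forall>a\<in>A. spec_le X a u}"

definition lower_bounds :: "'a topology \<Rightarrow> 'a set \<Rightarrow> 'a set" where
  "lower_bounds X A = {l \<in> topspace X. \<forall>a\<in>A. spec_le X l a}"

definition delta_cut :: "'a topology \<Rightarrow> 'a set \<Rightarrow> 'a set" where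
  "delta_cut X A = lower_bounds X (upper_bounds X A)"

definition irreducible_in :: "'a topology \<Rightarrow> 'a set \<Rightarrow> bool" where
  "irreducible_in X A \<longleftrightarrow> A \<noteq> {} \<and> A \<subseteq> topspace X \<and>
     (\<forall>F1 F2. closedin X F1 \<and> closedin X F2 \<and> A \<subseteq> F1 \<union> F2 \<longrightarrow> A \<subseteq> F1 \<or> A \<subseteq> F2)"

definition fin_subsets :: "'a topology \<Rightarrow> 'a set set" where
  "fin_subsets X = {G. G \<noteq> {} \<and> finite G \<and> G \<subseteq> topspace X}"

definition saturated_in :: "'a topology \<Rightarrow> 'a set \<Rightarrow> bool" where
  "saturated_in X A \<longleftrightarrow> A \<subseteq> topspace X \<and> upset X A = A"

definition smyth_carrier :: "'a topology \<Rightarrow> 'a set set" where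
  "smyth_carrier X = {Q. Q \<noteq> {} \<and> compactin X Q \<and> saturated_in X Q}"

definition box :: "'a topology \<Rightarrow> 'a set \<Rightarrow> 'a set set" where
  "box X U = {Q \<in> smyth_carrier X. Q \<subseteq> U}"

definition smyth_space :: "'a topology \<Rightarrow> 'a set topology" where
  "smyth_space X = topology_generated_by {box X U | U. openin X U}"

definition directed_set :: "'i set \<Rightarrow> ('i \<Rightarrow> 'i \<Rightarrow> bool) \<Rightarrow> bool" where
  "directed_set I le \<longleftrightarrow> I \<noteq> {} \<and> (\<forall>i\<in>I. le i i) \<and>
     (\<forall>i\<in>I. \<forall>j\<in>I. \<forall>k\<in>I. le i j \<and> le j k \<longrightarrow> le i k) \<and>
     (\<forall>i\<in>I. \<forall>j\<in>I. \<exists>k\<in>I. le i k \<and> le j k)"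

definition eventually_in :: "'i set \<Rightarrow> ('i \<Rightarrow> 'i \<Rightarrow> bool) \<Rightarrow> ('i \<Rightarrow> 'a) \<Rightarrow> 'a set \<Rightarrow> bool" where
  "eventually_in I le xn U \<longleftrightarrow> (\<exists>i0\<in>I. \<forall>i\<in>I. le i0 i \<longrightarrow> xn i \<in> U)"

definition gsi2_converges ::
  "'a topology \<Rightarrow> 'i set \<Rightarrow> ('i \<Rightarrow> 'i \<Rightarrow> bool) \<Rightarrow> ('i \<Rightarrow> 'a) \<Rightarrow> 'a \<Rightarrow> bool" where
  "gsi2_converges X I le xn x \<longleftrightarrow>
     (\<exists>\<F>. \<F> \<subseteq> fin_subsets X \<and>
        irreducible_in (smyth_space X) ((\<lambda>G. upset X G) ` \<F>) \<and>
        (\<forall>U. openin X U \<and> (\<exists>G\<in>\<F>. upset X G \<subseteq> U) \<longrightarrow> eventually_in I le xn U) \<and>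
        (\<Inter>G\<in>\<F>. upset X G) \<subseteq> upset X {x})"

end

theory Submission
  imports Defs
begin

text \<open>Take the nonempty traces U \<inter> F of open sets on F, directed by reverse inclusion (this is
  where irreducibility of F enters), and pick a point of F in each: the resulting net is eventually
  in every open set meeting F. The singletons of F then witness GSI_2-convergence: a \<mapsto> \<up>a is
  continuous into the Smyth power space, so it maps the irreducible set F to an irreducible set,
  and the intersection of all \<up>a with a \<in> F is the set of upper bounds of F, which lies above
  any x \<in> F^delta.\<close>

lemma spec_le_refl: "a \<in> topspace X \<Longrightarrow> spec_le X a a"
  unfolding spec_le_def in_closure_of by auto

lemma spec_le_trans: "spec_le X a b \<Longrightarrow> spec_le X b c \<Longrightarrow> spec_le X a c"
  unfolding spec_le_def in_closure_of by auto

lemma openin_spec_le_upward: "openin X U \<Longrightarrow> a \<in> U \<Longrightarrow> spec_le X a y \<Longrightarrow> y \<in> U"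
  unfolding spec_le_def in_closure_of by auto

lemma upset_singleton_iff: "y \<in> upset X {a} \<longleftrightarrow> y \<in> topspace X \<and> spec_le X a y"
  unfolding upset_def by blast

lemma mem_upset_singleton: "a \<in> topspace X \<Longrightarrow> a \<in> upset X {a}"
  by (simp add: upset_singleton_iff spec_le_refl)

lemma upset_singleton_subset_open_iff:
  assumes "openin X U" "a \<in> topspace X"
  shows "upset X {a} \<subseteq> U \<longleftrightarrow> a \<in> U"
proof
  show "upset X {a} \<subseteq> U \<Longrightarrow> a \<in> U"
    using mem_upset_singleton[OF assms(2)] by blast
  show "a \<in> U \<Longrightarrow> upset X {a} \<subseteq> U"
    using openin_spec_le_upward[OF assms(1)] by (auto simp: upset_singleton_iff)
qed

lemma upset_upset: "upset X (upset X A) = upset X A"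
proof (intro equalityI subsetI)
  fix y assume "y \<in> upset X (upset X A)"
  then obtain a b where "y \<in> topspace X" "a \<in> A" "spec_le X a b" "spec_le X b y"
    unfolding upset_def by blast
  moreover from this have "spec_le X a y"
    by (blast intro: spec_le_trans)
  ultimately show "y \<in> upset X A"
    unfolding upset_def by blast
next
  fix y assume y: "y \<in> upset X A"
  then have "spec_le X y y"
    by (simp add: upset_def spec_le_refl)
  with y show "y \<in> upset X (upset X A)"
    unfolding upset_def by blast
qed

lemma upset_singleton_in_smyth_carrier:
  assumes a: "a \<in> topspace X"
  shows "upset X {a} \<in> smyth_carrier X"
proof -
  have top: "upset X {a} \<subseteq> topspace X"
    by (auto simp: upset_singleton_iff)
  have "compactin X (upset X {a})"
    unfolding compactin_def
  proof (intro conjI allI impI top)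
    fix \<U> assume cover: "Ball \<U> (openin X) \<and> upset X {a} \<subseteq> \<Union>\<U>"
    then obtain U where "U \<in> \<U>" "a \<in> U"
      using mem_upset_singleton[OF a] by blast
    moreover from this cover have "upset X {a} \<subseteq> U"
      using upset_singleton_subset_open_iff[OF _ a] by blast
    ultimately show "\<exists>\<F>. finite \<F> \<and> \<F> \<subseteq> \<U> \<and> upset X {a} \<subseteq> \<Union>\<F>"
      by (intro exI[of _ "{U}"]) auto
  qed
  then show ?thesis
    using mem_upset_singleton[OF a] upset_upset[of X "{a}"] top
    unfolding smyth_carrier_def saturated_in_def by blast
qed

lemma continuous_map_upset_singleton:
  "continuous_map X (smyth_space X) (\<lambda>a. upset X {a})"
  unfolding smyth_space_def
proof (rule continuous_on_generated_topo)
  fix B assume "B \<in> {box X U |U. openin X U}"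
  then obtain U where U: "openin X U" and B: "B = box X U" by auto
  have "a \<in> (\<lambda>a. upset X {a}) -` B \<inter> topspace X \<longleftrightarrow> a \<in> U" for a
  proof (cases "a \<in> topspace X")
    case True
    then show ?thesis
      using upset_singleton_subset_open_iff[OF U True] upset_singleton_in_smyth_carrier[OF True]
      by (simp add: B box_def)
  next
    case False
    then show ?thesis
      using openin_subset[OF U] by auto
  qed
  then have "(\<lambda>a. upset X {a}) -` B \<inter> topspace X = U"
    by blast
  with U show "openin X ((\<lambda>a. upset X {a}) -` B \<inter> topspace X)" by simp
next
  have "upset X {a} \<in> box X (topspace X)" if "a \<in> topspace X" for a
    using upset_singleton_in_smyth_carrier[OF that] by (auto simp: box_def upset_def)
  moreover have "box X (topspace X) \<in> {box X U |U. openin X U}"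
    by auto
  ultimately show "(\<lambda>a. upset X {a}) ` topspace X \<subseteq> \<Union> {box X U |U. openin X U}"
    by blast
qed

lemma irreducible_in_continuous_image:
  assumes f: "continuous_map X Y f" and A: "irreducible_in X A"
  shows "irreducible_in Y (f ` A)"
  unfolding irreducible_in_def
proof (intro conjI allI impI)
  show "f ` A \<noteq> {}" "f ` A \<subseteq> topspace Y"
    using A continuous_map_image_subset_topspace[OF f] unfolding irreducible_in_def by auto
next
  fix C1 C2 assume C: "closedin Y C1 \<and> closedin Y C2 \<and> f ` A \<subseteq> C1 \<union> C2"
  have "closedin X {x \<in> topspace X. f x \<in> C1}" "closedin X {x \<in> topspace X. f x \<in> C2}"
    using C f closedin_continuous_map_preimage by blast+
  moreover have "A \<subseteq> {x \<in> topspace X. f x \<in> C1} \<union> {x \<in> topspace X. f x \<in> C2}"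
    using A C unfolding irreducible_in_def by blast
  ultimately show "f ` A \<subseteq> C1 \<or> f ` A \<subseteq> C2"
    using A unfolding irreducible_in_def by blast
qed

lemma irreducible_in_open_Int:
  assumes "irreducible_in X F" "openin X U" "openin X V" "U \<inter> F \<noteq> {}" "V \<inter> F \<noteq> {}"
  shows "U \<inter> V \<inter> F \<noteq> {}"
proof
  assume "U \<inter> V \<inter> F = {}"
  then have "F \<subseteq> (topspace X - U) \<union> (topspace X - V)"
    using assms(1) unfolding irreducible_in_def by auto
  then have "F \<subseteq> topspace X - U \<or> F \<subseteq> topspace X - V"
    using assms(1-3) unfolding irreducible_in_def by blast
  with assms(4,5) show False by auto
qed

lemma Inter_upset_singletons_eq_upper_bounds:
  assumes "F \<noteq> {}"
  shows "(\<Inter>a\<in>F. upset X {a}) = upper_bounds X F"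
  using assms unfolding upper_bounds_def by (auto simp: upset_singleton_iff)

lemma upper_bounds_subset_upset_delta_cut:
  "x \<in> delta_cut X F \<Longrightarrow> upper_bounds X F \<subseteq> upset X {x}"
  unfolding delta_cut_def lower_bounds_def upper_bounds_def upset_def by auto

lemma gsi2_converges_if_eventually_in_open_meeting:
  assumes F: "irreducible_in X F" and x: "x \<in> delta_cut X F"
    and ev: "\<And>U. openin X U \<Longrightarrow> U \<inter> F \<noteq> {} \<Longrightarrow> eventually_in I le xn U"
  shows "gsi2_converges X I le xn x"
proof -
  have F_top: "F \<subseteq> topspace X" and "F \<noteq> {}"
    using F unfolding irreducible_in_def by auto
  have img: "(\<lambda>G. upset X G) ` (\<lambda>a. {a}) ` F = (\<lambda>a. upset X {a}) ` F"
    by auto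
  show ?thesis
    unfolding gsi2_converges_def
  proof (intro exI[of _ "(\<lambda>a. {a}) ` F"] conjI allI impI)
    show "(\<lambda>a. {a}) ` F \<subseteq> fin_subsets X"
      using F_top unfolding fin_subsets_def by auto
    show "irreducible_in (smyth_space X) ((\<lambda>G. upset X G) ` (\<lambda>a. {a}) ` F)"
      unfolding img using continuous_map_upset_singleton F by (rule irreducible_in_continuous_image)
    show "(\<Inter>G\<in>(\<lambda>a. {a}) ` F. upset X G) \<subseteq> upset X {x}"
      unfolding img Inter_upset_singletons_eq_upper_bounds[OF \<open>F \<noteq> {}\<close>]
      by (rule upper_bounds_subset_upset_delta_cut[OF x])
  next
    fix U assume "openin X U \<and> (\<exists>G\<in>(\<lambda>a. {a}) ` F. upset X G \<subseteq> U)"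
    then obtain a where U: "openin X U" and "a \<in> F" "upset X {a} \<subseteq> U"
      by blast
    then have "a \<in> U"
      using F_top upset_singleton_subset_open_iff[OF U, of a] by blast
    with U \<open>a \<in> F\<close> show "eventually_in I le xn U"
      using ev by blast
  qed
qed

lemma irreducible_in_net_eventually_in_open_meeting:
  fixes X :: "'a topology"
  assumes F: "irreducible_in X F"
  obtains I :: "'a set set" and le xn where "directed_set I le" "\<forall>i\<in>I. xn i \<in> F"
    "\<And>U. openin X U \<Longrightarrow> U \<inter> F \<noteq> {} \<Longrightarrow> eventually_in I le xn U"
proof -
  define I where "I = {U \<inter> F | U. openin X U \<and> U \<inter> F \<noteq> {}}"
  define xn :: "'a set \<Rightarrow> 'a" where "xn A = (SOME a. a \<in> A)" for A
  have xn: "xn A \<in> A" if "A \<in> I" for A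
    unfolding xn_def some_in_eq using that unfolding I_def by blast
  have "directed_set I (\<lambda>A B. B \<subseteq> A)"
    unfolding directed_set_def
  proof (intro conjI ballI)
    show "I \<noteq> {}"
      using F unfolding I_def irreducible_in_def by (auto intro!: exI[of _ "topspace X"])
  next
    fix i j assume "i \<in> I" "j \<in> I"
    then obtain U V where "openin X U" "U \<inter> F \<noteq> {}" "i = U \<inter> F"
      "openin X V" "V \<inter> F \<noteq> {}" "j = V \<inter> F" unfolding I_def by auto
    then have "(U \<inter> V) \<inter> F \<in> I" "(U \<inter> V) \<inter> F \<subseteq> i" "(U \<inter> V) \<inter> F \<subseteq> j"
      using irreducible_in_open_Int[OF F] unfolding I_def by auto
    then show "\<exists>k\<in>I. k \<subseteq> i \<and> k \<subseteq> j" by blast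
  qed auto
  moreover have "\<forall>i\<in>I. xn i \<in> F"
    using xn unfolding I_def by blast
  moreover have "eventually_in I (\<lambda>A B. B \<subseteq> A) xn U"
    if "openin X U" "U \<inter> F \<noteq> {}" for U
  proof -
    have "U \<inter> F \<in> I" using that unfolding I_def by blast
    then show ?thesis unfolding eventually_in_def using xn by blast
  qed
  ultimately show ?thesis by (rule that)
qed

theorem lemma3p6:
  fixes X :: "'a topology" and F :: "'a set" and x :: 'a
  assumes "t0_space X"
    and "irreducible_in X F"
    and "x \<in> delta_cut X F"
  shows "\<exists>(I :: 'a set set) le xn. directed_set I le \<and> (\<forall>i\<in>I. xn i \<in> F) \<and>
           gsi2_converges X I le xn x"
proof -
  obtain I :: "'a set set" and le xn where "directed_set I le" "\<forall>i\<in>I. xn i \<in> F"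
    and ev: "\<And>U. openin X U \<Longrightarrow> U \<inter> F \<noteq> {} \<Longrightarrow> eventually_in I le xn U"
    using irreducible_in_net_eventually_in_open_meeting[OF assms(2)] by blast
  moreover have "gsi2_converges X I le xn x"
    using assms(2,3) ev by (rule gsi2_converges_if_eventually_in_open_meeting)
  ultimately show ?thesis by blast
qed

end
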